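(* Let $n\ge 2$. Let $Br^n$ be the classical $n$-strand (Artin) braid group with generators $\sigma_1,\dots,\sigma_{n-1}$, and let $Br_2^n$ be the $n$-strand $\mathbb{Z}_2$-braid group (defined in the context). Consider the map $Br^n\to Br_2^n$ sending each braid word in $\sigma_i^{\pm1}$ to the word obtained by replacing each $\sigma_i^{\pm1}$ by $\sigma_{i,0}^{\pm1}$ (i.e. a classical braid is regarded as a $\mathbb{Z}_2$-braid all of whose crossings are even). If two classical braids $\gamma_1,\gamma_2\in Br^n$ have equal images in $Br_2^n$, then $\gamma_1=\gamma_2$ in $Br^n$.
   Context: The classical braid group $Br^n$ has generators $\sigma_1,\dots,\sigma_{n-1}$ and relations $\sigma_i\sigma_j=\sigma_j\sigma_i$ for $|i-j|\ge 2$ and $\sigma_i\sigma_{i+1}\sigma_i=\sigma_{i+1}\sigma_i\sigma_{i+1}$ for $1\le i\le n-2$. The $n$-strand $\mathbb{Z}_2$-braid group $Br_2^n$ is the group with generators $\sigma_{i,0},\sigma_{i,1}$, $i=1,\dots,n-1$, and relations $\sigma_{i,\varepsilon}\sigma_{j,\eta}=\sigma_{j,\eta}\sigma_{i,\varepsilon}$ for all $|i-j|\ge 2$ and all $\varepsilon,\eta\in\{0,1\}$, and $\sigma_{i,\varepsilon}\sigma_{i+1,\eta}\sigma_{i,\xi}=\sigma_{i+1,\xi}\sigma_{i,\eta}\sigma_{i+1,\varepsilon}$ for $1\le i\le n-2$ and all $\varepsilon,\eta,\xi\in\{0,1\}$ with $\varepsilon+\eta+\xi\equiv 0\pmod 2$.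 Generators $\sigma_{i,0}$ are called even, $\sigma_{i,1}$ odd. *)

theory Defs
  imports Main
begin

text \<open>Group presentations: a word is a list of letters (g, inv), where inv = True
  means the inverse of generator g. Two words over the generating set S represent
  the same element of the group presented by generators S and relations R iff they
  are related by the congruence generated by free cancellation and R.\<close>

type_synonym 'g word = "('g \<times> bool) list"

definition pos_word :: "'g list \<Rightarrow> 'g word" where
  "pos_word xs = map (\<lambda>g. (g, False)) xs"

inductive pres_eq :: "'g set \<Rightarrow> ('g word \<times> 'g word) set \<Rightarrow> 'g word \<Rightarrow> 'g word \<Rightarrow> bool"
  for S :: "'g set" and R :: "('g word \<times> 'g word) set" where
  refl: "pres_eq S R w w"
| sym: "pres_eq S R u w \<Longrightarrow> pres_eq S R w u"
| trans: "pres_eq S R u v \<Longrightarrow> pres_eq S R v w \<Longrightarrow> pres_eq S R u w"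
| cancel: "g \<in> S \<Longrightarrow> pres_eq S R (u @ [(g, b), (g, \<not> b)] @ v) (u @ v)"
| rel: "(l, r) \<in> R \<Longrightarrow> pres_eq S R (u @ l @ v) (u @ r @ v)"

definition word_over :: "'g set \<Rightarrow> 'g word \<Rightarrow> bool" where
  "word_over S w \<longleftrightarrow> (\<forall>x \<in> set w. fst x \<in> S)"

definition braid_gens :: "nat \<Rightarrow> nat set" where
  "braid_gens n = {1..n-1}"

definition braid_rels :: "nat \<Rightarrow> (nat word \<times> nat word) set" where
  "braid_rels n =
     {(pos_word [i, j], pos_word [j, i]) | i j.
        1 \<le> i \<and> i \<le> n - 1 \<and> 1 \<le> j \<and> j \<le> n - 1 \<and> (i + 2 \<le> j \<or> j + 2 \<le> i)}
   \<union> {(pos_word [i, i+1, i], pos_word [i+1, i, i+1]) | i. 1 \<le> i \<and> i \<le> n - 2}"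

definition Br :: "nat \<Rightarrow> nat word \<Rightarrow> nat word \<Rightarrow> bool" where
  "Br n = pres_eq (braid_gens n) (braid_rels n)"

text \<open>Z_2-braid group Br_2^n: generators sigma_{i,e}, 1 <= i <= n-1, e \<in> {0,1},
  encoded as pairs (i, e).\<close>

definition z2braid_gens :: "nat \<Rightarrow> (nat \<times> nat) set" where
  "z2braid_gens n = {1..n-1} \<times> {0, 1}"

definition z2braid_rels :: "nat \<Rightarrow> ((nat \<times> nat) word \<times> (nat \<times> nat) word) set" where
  "z2braid_rels n =
     {(pos_word [(i, e), (j, h)], pos_word [(j, h), (i, e)]) | i j e h.
        1 \<le> i \<and> i \<le> n - 1 \<and> 1 \<le> j \<and> j \<le> n - 1 \<and> (i + 2 \<le> j \<or> j + 2 \<le> i)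
        \<and> e \<in> {0, 1} \<and> h \<in> {0, 1}}
   \<union> {(pos_word [(i, e), (i+1, h), (i, x)], pos_word [(i+1, x), (i, h), (i+1, e)]) | i e h x.
        1 \<le> i \<and> i \<le> n - 2 \<and> e \<in> {0, 1} \<and> h \<in> {0, 1} \<and> x \<in> {0, 1}
        \<and> (e + h + x) mod 2 = 0}"

definition Br2 :: "nat \<Rightarrow> (nat \<times> nat) word \<Rightarrow> (nat \<times> nat) word \<Rightarrow> bool" where
  "Br2 n = pres_eq (z2braid_gens n) (z2braid_rels n)"

definition even_embed :: "nat word \<Rightarrow> (nat \<times> nat) word" where
  "even_embed w = map (\<lambda>(i, b). ((i, 0), b)) w"

end

theory Submission
  imports Defs
begin

text \<open>Forgetting the parities, \<open>\<sigma>\<^sub>i\<^sub>,\<^sub>\<epsilon> \<mapsto> \<sigma>\<^sub>i\<close>, sends every defining relation of \<open>Br\<^sub>2\<^sup>n\<close>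
  to a defining relation of \<open>Br\<^sup>n\<close>, so it induces a homomorphism \<open>Br\<^sub>2\<^sup>n \<rightarrow> Br\<^sup>n\<close>. It is a
  left inverse of the even embedding, which is therefore injective.\<close>

lemma pres_eq_map_gens:
  assumes "pres_eq S R u v"
    and "f ` S \<subseteq> S'"
    and "\<And>l r. (l, r) \<in> R \<Longrightarrow> (map (apfst f) l, map (apfst f) r) \<in> R'"
  shows "pres_eq S' R' (map (apfst f) u) (map (apfst f) v)"
  using assms(1)
proof (induction rule: pres_eq.induct)
  case (refl w)
  show ?case by (rule pres_eq.refl)
next
  case (sym u w)
  then show ?case by (blast intro: pres_eq.sym)
next
  case (trans u v w)
  then show ?case by (blast intro: pres_eq.trans)
next
  case (cancel g u b v)
  then have "f g \<in> S'" using assms(2) by blast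
  from pres_eq.cancel[OF this, of R' "map (apfst f) u" b "map (apfst f) v"]
  show ?case by simp
next
  case (rel l r u v)
  from pres_eq.rel[OF assms(3)[OF rel], of S' "map (apfst f) u" "map (apfst f) v"]
  show ?case by simp
qed

lemma fst_z2braid_gens: "fst ` z2braid_gens n \<subseteq> braid_gens n"
  by (auto simp: z2braid_gens_def braid_gens_def)

lemma forget_parity_z2braid_rels:
  assumes "(l, r) \<in> z2braid_rels n"
  shows "(map (apfst fst) l, map (apfst fst) r) \<in> braid_rels n"
  using assms unfolding z2braid_rels_def braid_rels_def pos_word_def by auto

lemma Br2_imp_Br_forget_parity:
  assumes "Br2 n u v"
  shows "Br n (map (apfst fst) u) (map (apfst fst) v)"
  using pres_eq_map_gens[OF assms[unfolded Br2_def] fst_z2braid_gens forget_parity_z2braid_rels]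
  unfolding Br_def .

lemma forget_parity_even_embed: "map (apfst fst) (even_embed w) = w"
  by (induction w) (auto simp: even_embed_def)

theorem theorem1:
  fixes n :: nat and \<gamma>1 \<gamma>2 :: "nat word"
  assumes "n \<ge> 2"
    and "word_over (braid_gens n) \<gamma>1" and "word_over (braid_gens n) \<gamma>2"
    and "Br2 n (even_embed \<gamma>1) (even_embed \<gamma>2)"
  shows "Br n \<gamma>1 \<gamma>2"
  using Br2_imp_Br_forget_parity[OF assms(4)] by (simp only: forget_parity_even_embed)

end
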